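(* Consider the ISQA framework described in the context for $\min_xF(x)=f(x)+\Psi(x)$ with an arbitrary $x^0\in\mathcal{H}$. Assume the solution set $\Omega$ is nonempty, $f$ is convex and $L$-smooth for some $L>0$, $\Psi$ is convex, proper and lower semicontinuous, there are $M\ge m>0$ with $MI\succeq H_t\succeq mI$ for all $t$, there is $\eta\in[0,1)$ such that $Q_t(p^t)-Q_t^*\le-\eta Q_t^*$ for all $t$, and there are $\xi,\zeta>0$ and $\theta\in(1/4,1]$ such that $$\zeta\operatorname{dist}(x,\Omega)\le\big(F(x)-F^*\big)^{\theta}\quad\text{for all }x\text{ with }F(x)-F^*\le\xi.$$ Then $x^t\to x^*$ for some $x^*\in\Omega$.
   Context: $\mathcal{H}$ is a Euclidean space; $F^*$ is the minimum value of $F$ and $\Omega$ its set of minimizers; $\operatorname{dist}(x,\Omega)=\min_{y\in\Omega}\|x-y\|$. $f$ is $L$-smooth if differentiable with $L$-Lipschitz gradient. ISQA framework: given $x^0$ and $\gamma,\beta\in(0,1)$, for $t=0,1,\dots$: choose a self-adjoint positive semidefinite linear operator $H_t$; let $Q_t(p):=\langle\nabla f(x^t),p\rangle+\tfrac12\langle p,H_tp\rangle+\Psi(x^t+p)-\Psi(x^t)$ and $Q_t^*:=\min_pQ_t(p)$; compute an approximate minimizer $p^t$; let $\alpha_t$ be the largest element of $\{1,\beta,\beta^2,\dots\}$ with $F(x^t+\alpha_tp^t)\le F(x^t)+\gamma\alpha_tQ_t(p^t)$; set $x^{t+1}=x^t+\alpha_tp^t$. *)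

theory Defs
  imports "HOL-Analysis.Analysis"
begin

definition ext_convex :: "('a::real_vector \<Rightarrow> ereal) \<Rightarrow> bool" where
  "ext_convex \<Psi> \<longleftrightarrow> (\<forall>x y u. 0 \<le> u \<and> u \<le> 1 \<longrightarrow>
      \<Psi> ((1 - u) *\<^sub>R x + u *\<^sub>R y) \<le> ereal (1 - u) * \<Psi> x + ereal u * \<Psi> y)"

definition ext_proper :: "('a \<Rightarrow> ereal) \<Rightarrow> bool" where
  "ext_proper \<Psi> \<longleftrightarrow> (\<forall>x. \<Psi> x \<noteq> -\<infinity>) \<and> (\<exists>x. \<Psi> x \<noteq> \<infinity>)"

definition ext_lsc :: "('a::topological_space \<Rightarrow> ereal) \<Rightarrow> bool" where
  "ext_lsc \<Psi> \<longleftrightarrow> (\<forall>c. closed {x. \<Psi> x \<le> c})"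

definition L_smooth :: "real \<Rightarrow> ('a::euclidean_space \<Rightarrow> real) \<Rightarrow> ('a \<Rightarrow> 'a) \<Rightarrow> bool" where
  "L_smooth L f g \<longleftrightarrow> (\<forall>x. (f has_derivative (\<lambda>h. g x \<bullet> h)) (at x))
       \<and> (\<forall>x y. norm (g x - g y) \<le> L * norm (x - y))"

definition Fobj :: "('a \<Rightarrow> real) \<Rightarrow> ('a \<Rightarrow> ereal) \<Rightarrow> 'a \<Rightarrow> ereal" where
  "Fobj f \<Psi> x = ereal (f x) + \<Psi> x"

definition Qmodel :: "('a::euclidean_space \<Rightarrow> 'a) \<Rightarrow> ('a \<Rightarrow> ereal) \<Rightarrow> ('a \<Rightarrow> 'a) \<Rightarrow> 'a \<Rightarrow> 'a \<Rightarrow> ereal" where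
  "Qmodel g \<Psi> H x p = ereal (g x \<bullet> p + (1/2) * (p \<bullet> H p)) + \<Psi> (x + p) - \<Psi> x"

definition Qstar :: "('a::euclidean_space \<Rightarrow> 'a) \<Rightarrow> ('a \<Rightarrow> ereal) \<Rightarrow> ('a \<Rightarrow> 'a) \<Rightarrow> 'a \<Rightarrow> ereal" where
  "Qstar g \<Psi> H x = (INF p. Qmodel g \<Psi> H x p)"

end

theory Submission
  imports Defs
begin

text \<open>Write \<open>D\<^sub>t = F(x\<^sup>t) - F\<^sup>*\<close>. Every step size \<open>s\<close> with \<open>L s \<le> m/2\<close> passes the Armijo
  test, so the accepted steps are bounded below and \<open>D\<^sub>t - D\<^sub>t\<^sub>+\<^sub>1\<close> dominates both
  \<open>-Q\<^sub>t\<^sup>*\<close> and \<open>\<parallel>x\<^sup>t\<^sup>+\<^sup>1 - x\<^sup>t\<parallel>\<^sup>2\<close>. Evaluating the model along the segment from \<open>x\<^sup>t\<close> to its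
  projection onto \<open>\<Omega>\<close> and using the error bound gives \<open>-Q\<^sub>t\<^sup>* \<ge> \<omega>\<close> while \<open>D\<^sub>t > \<xi>\<close> and
  \<open>-Q\<^sub>t\<^sup>* \<ge> \<kappa> D\<^sub>t\<^sup>3\<^sup>/\<^sup>2\<close> afterwards. Hence \<open>D\<^sub>t \<rightarrow> 0\<close>, and with \<open>u\<^sub>t = D\<^sub>t\<^sup>1\<^sup>/\<^sup>4\<close> the
  estimate \<open>u\<^sup>4 - v\<^sup>4 \<le> 4u\<^sup>3(u - v)\<close> turns these bounds into
  \<open>\<parallel>x\<^sup>t\<^sup>+\<^sup>1 - x\<^sup>t\<parallel> \<le> C (u\<^sub>t - u\<^sub>t\<^sub>+\<^sub>1)\<close>: the steps are summable, so \<open>x\<^sup>t\<close> converges, and the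
  limit lies in \<open>\<Omega>\<close> because the error bound controls its distance to \<open>\<Omega>\<close> by \<open>D\<^sub>t\<close>.\<close>

lemma L_smooth_taylor_bound:
  fixes f :: "'a::euclidean_space \<Rightarrow> real"
  assumes "L_smooth L f g" "0 \<le> L"
  shows "\<bar>f y - f x - g x \<bullet> (y - x)\<bar> \<le> L * (norm (y - x))\<^sup>2"
proof -
  define h where "h = y - x"
  have der: "\<And>z. (f has_derivative (\<lambda>v. g z \<bullet> v)) (at z)"
    and lip: "\<And>a b. norm (g a - g b) \<le> L * norm (a - b)"
    using assms(1) unfolding L_smooth_def by auto
  have "((\<lambda>t. f (x + t *\<^sub>R h)) has_derivative (\<lambda>s. g (x + t *\<^sub>R h) \<bullet> (s *\<^sub>R h)))
          (at t within {0..1})" for t :: real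
  proof -
    have "((\<lambda>t. x + t *\<^sub>R h) has_derivative (\<lambda>s. s *\<^sub>R h)) (at t within {0..1})"
      by (auto intro!: derivative_eq_intros)
    from has_derivative_in_compose[OF this der[THEN has_derivative_at_withinI]]
    show ?thesis by (simp add: o_def)
  qed
  then obtain t where t: "t \<in> {0..1}"
    and mvt: "f (x + 1 *\<^sub>R h) - f (x + 0 *\<^sub>R h) = g (x + t *\<^sub>R h) \<bullet> ((1 - 0) *\<^sub>R h)"
    using mvt_very_simple[of 0 1 "\<lambda>t. f (x + t *\<^sub>R h)"] by fastforce
  have "\<bar>f y - f x - g x \<bullet> (y - x)\<bar> = \<bar>(g (x + t *\<^sub>R h) - g x) \<bullet> h\<bar>"
    using mvt by (simp add: h_def inner_diff_left)
  also have "\<dots> \<le> norm (g (x + t *\<^sub>R h) - g x) * norm h"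
    by (rule Cauchy_Schwarz_ineq2)
  also have "\<dots> \<le> L * (t * norm h) * norm h"
    using lip[of "x + t *\<^sub>R h" x] t by (intro mult_right_mono) auto
  also have "\<dots> = t * (L * (norm h)\<^sup>2)"
    by (simp add: power2_eq_square)
  also have "\<dots> \<le> L * (norm h)\<^sup>2"
    using t assms(2) by (intro mult_left_le_one_le) auto
  finally show ?thesis by (simp add: h_def)
qed

lemma L_smooth_convex_gradient_ineq:
  fixes f :: "'a::euclidean_space \<Rightarrow> real"
  assumes "L_smooth L f g" "0 \<le> L" "convex_on UNIV f"
  shows "g a \<bullet> (b - a) \<le> f b - f a"
proof -
  define h where "h = b - a"
  have bound: "g a \<bullet> h - (f b - f a) \<le> L * t * (norm h)\<^sup>2" if t: "0 < t" "t \<le> 1" for t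
  proof -
    have "f (a + t *\<^sub>R h) \<le> (1 - t) * f a + t * f b"
      using convex_onD[OF assms(3), of t a b] t by (simp add: h_def algebra_simps)
    moreover have "f a + t * (g a \<bullet> h) - L * t\<^sup>2 * (norm h)\<^sup>2 \<le> f (a + t *\<^sub>R h)"
      using L_smooth_taylor_bound[OF assms(1,2), of "a + t *\<^sub>R h" a] t
      by (simp add: power_mult_distrib abs_le_iff)
    ultimately have "t * (g a \<bullet> h - (f b - f a)) \<le> t * (L * t * (norm h)\<^sup>2)"
      by (simp add: algebra_simps power2_eq_square)
    then show ?thesis using t by simp
  qed
  have "eventually (\<lambda>t. t \<in> {0<..<1}) (at_right (0::real))"
    by (rule eventually_at_right_real) simp
  then have "eventually (\<lambda>t. g a \<bullet> h - (f b - f a) \<le> L * t * (norm h)\<^sup>2) (at_right 0)"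
    by (rule eventually_mono) (use bound in auto)
  moreover have "((\<lambda>t. L * t * (norm h)\<^sup>2) \<longlongrightarrow> 0) (at_right 0)"
    by (auto intro!: tendsto_eq_intros)
  ultimately have "g a \<bullet> h - (f b - f a) \<le> 0"
    by (intro tendsto_lowerbound[OF _ _ trivial_limit_at_right_real])
  then show ?thesis by (simp add: h_def)
qed

lemma infdist_closest_point:
  fixes S :: "'a::euclidean_space set"
  assumes "closed S" "S \<noteq> {}"
  shows "infdist y S = dist y (closest_point S y)"
  using setdist_closest_point[OF assms] by (simp add: infdist_eq_setdist)

lemma infdist_segment_to_closest_point:
  fixes S :: "'a::euclidean_space set"
  assumes S: "convex S" "closed S" "S \<noteq> {}" and "0 \<le> l"
  shows "infdist (closest_point S y + l *\<^sub>R (y - closest_point S y)) S = l * infdist y S"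
proof -
  define w where "w = closest_point S y"
  define z where "z = w + l *\<^sub>R (y - w)"
  have w: "w \<in> S" unfolding w_def by (rule closest_point_in_set[OF S(2,3)])
  have "dist z w \<le> dist z v" if v: "v \<in> S" for v
  proof -
    have "(y - w) \<bullet> (v - w) \<le> 0"
      using closest_point_dot[OF S(1,2) v] by (simp add: w_def)
    then have "l * ((y - w) \<bullet> (v - w)) \<le> 0"
      using \<open>0 \<le> l\<close> by (simp add: mult_nonneg_nonpos)
    then have "0 \<le> - 2 * l * ((y - w) \<bullet> (v - w)) + (norm (v - w))\<^sup>2"
      using zero_le_power2[of "norm (v - w)"] by linarith
    moreover have "(dist z v)\<^sup>2
        = (dist z w)\<^sup>2 - 2 * l * ((y - w) \<bullet> (v - w)) + (norm (v - w))\<^sup>2"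
      unfolding z_def dist_norm power2_norm_eq_inner
      by (simp add: inner_commute algebra_simps)
    ultimately have "(dist z w)\<^sup>2 \<le> (dist z v)\<^sup>2" by linarith
    then show ?thesis by (simp add: power2_le_iff_abs_le)
  qed
  then have "closest_point S z = w"
    using closest_point_unique[OF S(1,2) w] by metis
  then have "infdist z S = dist z w"
    using infdist_closest_point[OF S(2,3)] by simp
  also have "\<dots> = l * infdist y S"
    using infdist_closest_point[OF S(2,3)] \<open>0 \<le> l\<close> by (simp add: z_def w_def dist_norm)
  finally show ?thesis by (simp add: z_def w_def)
qed

lemma convergent_if_summable_norm_diff:
  fixes X :: "nat \<Rightarrow> 'a::banach"
  assumes "summable (\<lambda>n. norm (X (Suc n) - X n))"
  shows "convergent X"
proof -
  have "summable (\<lambda>n. X (Suc n) - X n)"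
    using summable_norm_cancel[OF assms] .
  then have "convergent (\<lambda>n. X 0 + (\<Sum>i<n. X (Suc i) - X i))"
    by (intro convergent_add convergent_const) (simp add: summable_iff_convergent)
  then show ?thesis by (simp add: sum_lessThan_telescope)
qed

lemma le_neg_min_of_quadratic_bound:
  fixes q D A :: real
  assumes "0 \<le> D" "0 \<le> A" and bound: "\<And>s. 0 \<le> s \<Longrightarrow> s \<le> 1 \<Longrightarrow> q \<le> - s * D + s\<^sup>2 * A / 2"
  shows "q \<le> - min (D\<^sup>2 / (2 * A)) (D / 2)"
proof (cases "D \<le> A")
  case True
  show ?thesis
  proof (cases "A = 0")
    case True
    then show ?thesis using bound[of 0] by simp
  next
    case False
    then have "q \<le> - (D / A) * D + (D / A)\<^sup>2 * A / 2"
      using True assms(1,2) by (intro bound) auto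
    also have "\<dots> = - (D\<^sup>2 / (2 * A))"
      using False by (simp add: field_simps power2_eq_square)
    finally show ?thesis by linarith
  qed
next
  case False
  then have "q \<le> - D + A / 2" using bound[of 1] by simp
  then show ?thesis using False by linarith
qed

lemma pow4_diff_le:
  fixes u v :: real
  assumes "0 \<le> v" "v \<le> u"
  shows "u ^ 4 - v ^ 4 \<le> 4 * u ^ 3 * (u - v)"
proof -
  have "u\<^sup>2 * v \<le> u\<^sup>2 * u" "u * v\<^sup>2 \<le> u * u\<^sup>2" "v ^ 3 \<le> u ^ 3"
    using assms by (auto intro!: mult_left_mono power_mono)
  then have "u ^ 3 + u\<^sup>2 * v + u * v\<^sup>2 + v ^ 3 \<le> 4 * u ^ 3"
    by (simp add: power2_eq_square power3_eq_cube algebra_simps)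
  then have "(u - v) * (u ^ 3 + u\<^sup>2 * v + u * v\<^sup>2 + v ^ 3) \<le> (u - v) * (4 * u ^ 3)"
    using assms(2) by (intro mult_left_mono) auto
  then show ?thesis
    by (simp add: algebra_simps power2_eq_square power3_eq_cube power4_eq_xxxx)
qed

lemma le_linear_of_quartic_decrease:
  fixes u v S K c :: real
  assumes "0 \<le> v" "v \<le> u" "0 \<le> K" "0 < c"
    and S: "S\<^sup>2 \<le> K * (u ^ 4 - v ^ 4)" and decrease: "c * u ^ 6 \<le> u ^ 4 - v ^ 4"
  shows "S \<le> 4 * sqrt (K / c) * (u - v)"
proof (cases "u = 0")
  case True
  then show ?thesis using S assms(1,2) by simp
next
  case False
  then have "0 < u" using assms(1,2) by simp
  note upper = pow4_diff_le[OF assms(1,2)]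
  have "0 \<le> u ^ 4 - v ^ 4"
    using decrease \<open>0 < u\<close> \<open>0 < c\<close> by (smt (verit) mult_pos_pos zero_less_power)
  then have "c * u ^ 6 * (u ^ 4 - v ^ 4) \<le> (u ^ 4 - v ^ 4) * (u ^ 4 - v ^ 4)"
    using decrease by (intro mult_right_mono)
  also have "\<dots> \<le> (4 * u ^ 3 * (u - v)) * (4 * u ^ 3 * (u - v))"
    using upper \<open>0 \<le> u ^ 4 - v ^ 4\<close> assms(2) \<open>0 < u\<close> by (intro mult_mono) auto
  also have "\<dots> = u ^ 6 * (16 * (u - v)\<^sup>2)"
    by (simp add: algebra_simps power2_eq_square power3_eq_cube eval_nat_numeral)
  finally have "u ^ 6 * (c * (u ^ 4 - v ^ 4)) \<le> u ^ 6 * (16 * (u - v)\<^sup>2)"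
    by (simp add: algebra_simps)
  then have "c * (u ^ 4 - v ^ 4) \<le> 16 * (u - v)\<^sup>2"
    using \<open>0 < u\<close> by (simp add: mult_le_cancel_left_pos)
  then have "K * (u ^ 4 - v ^ 4) \<le> (K / c) * (16 * (u - v)\<^sup>2)"
    using assms(3,4) mult_left_mono[of "c * (u ^ 4 - v ^ 4)" _ "K / c"] by simp
  then have "S\<^sup>2 \<le> (K / c) * (16 * (u - v)\<^sup>2)"
    using S by linarith
  also have "\<dots> = (4 * sqrt (K / c) * (u - v))\<^sup>2"
    using assms(3,4) by (simp add: power_mult_distrib)
  finally show ?thesis
    by (rule power2_le_imp_le) (use assms in simp)
qed

lemma cubic_le_min_quartic_quadratic:
  fixes r a c :: real
  assumes "0 \<le> r" "r \<le> c" "0 < a" "0 < c"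
  shows "min (1 / (2 * a)) (1 / (2 * c)) * r ^ 3 \<le> min ((r\<^sup>2)\<^sup>2 / (2 * (a * r))) (r\<^sup>2 / 2)"
proof -
  let ?k = "min (1 / (2 * a)) (1 / (2 * c))"
  have "?k * r ^ 3 \<le> 1 / (2 * a) * r ^ 3"
    using assms(1) by (intro mult_right_mono) auto
  also have "\<dots> = (r\<^sup>2)\<^sup>2 / (2 * (a * r))"
    by (cases "r = 0") (simp_all add: power2_eq_square power3_eq_cube)
  finally have "?k * r ^ 3 \<le> (r\<^sup>2)\<^sup>2 / (2 * (a * r))" .
  moreover have "?k * r ^ 3 \<le> r\<^sup>2 / 2"
  proof -
    have "?k * r ^ 3 \<le> 1 / (2 * c) * r ^ 3"
      using assms(1) by (intro mult_right_mono) auto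
    also have "\<dots> = (r / c) * (r\<^sup>2 / 2)"
      by (simp add: power2_eq_square power3_eq_cube)
    also have "\<dots> \<le> r\<^sup>2 / 2"
      using assms by (intro mult_left_le_one_le) auto
    finally show ?thesis .
  qed
  ultimately show ?thesis by simp
qed

locale convex_composite =
  fixes f :: "'a::euclidean_space \<Rightarrow> real" and g :: "'a \<Rightarrow> 'a" and \<Psi> :: "'a \<Rightarrow> ereal"
    and L :: real and Fstar :: ereal and \<Omega> :: "'a set"
  assumes Fstar_def: "Fstar = (INF y. Fobj f \<Psi> y)"
    and \<Omega>_def: "\<Omega> = {y. Fobj f \<Psi> y = Fstar}"
    and \<Omega>_ne: "\<Omega> \<noteq> {}"
    and f_convex: "convex_on UNIV f"
    and L_pos: "L > 0" and f_smooth: "L_smooth L f g"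
    and \<Psi>_convex: "ext_convex \<Psi>" and \<Psi>_proper: "ext_proper \<Psi>" and \<Psi>_lsc: "ext_lsc \<Psi>"
begin

text \<open>Real-valued versions of \<open>\<Psi>\<close>, \<open>F\<close> and \<open>F\<^sup>*\<close>; they are meaningful only where
  \<open>\<Psi> y \<noteq> \<infinity>\<close>, since \<open>real_of_ereal \<infinity> = 0\<close>.\<close>

abbreviation \<psi> :: "'a \<Rightarrow> real" where "\<psi> y \<equiv> real_of_ereal (\<Psi> y)"
abbreviation obj :: "'a \<Rightarrow> real" where "obj y \<equiv> f y + \<psi> y"
abbreviation obj_min :: real where "obj_min \<equiv> real_of_ereal Fstar"

lemma Psi_eq_ereal: "\<Psi> y \<noteq> \<infinity> \<Longrightarrow> \<Psi> y = ereal (\<psi> y)"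
  using \<Psi>_proper by (cases "\<Psi> y") (auto simp: ext_proper_def)

lemma Fobj_eq_ereal: "\<Psi> y \<noteq> \<infinity> \<Longrightarrow> Fobj f \<Psi> y = ereal (obj y)"
  unfolding Fobj_def by (subst Psi_eq_ereal) auto

lemma Fobj_neq_infinity_iff: "Fobj f \<Psi> y \<noteq> \<infinity> \<longleftrightarrow> \<Psi> y \<noteq> \<infinity>"
  using Fobj_eq_ereal[of y] by (auto simp: Fobj_def)

lemma Fstar_le: "Fstar \<le> Fobj f \<Psi> y"
  unfolding Fstar_def by (rule INF_lower) simp

lemma Fstar_eq_ereal: "Fstar = ereal obj_min"
proof -
  obtain y where "\<Psi> y \<noteq> \<infinity>" using \<Psi>_proper by (auto simp: ext_proper_def)
  then have "Fstar \<noteq> \<infinity>"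
    using Fstar_le[of y] Fobj_eq_ereal[of y] by auto
  moreover obtain w where "w \<in> \<Omega>" using \<Omega>_ne by blast
  moreover have "\<Psi> w \<noteq> -\<infinity>" using \<Psi>_proper by (simp add: ext_proper_def)
  ultimately have "Fstar \<noteq> -\<infinity>"
    by (cases "\<Psi> w") (auto simp: \<Omega>_def Fobj_def)
  with \<open>Fstar \<noteq> \<infinity>\<close> show ?thesis by (cases Fstar) auto
qed

lemma obj_min_le: "\<Psi> y \<noteq> \<infinity> \<Longrightarrow> obj_min \<le> obj y"
  using Fstar_le[of y] by (subst (asm) Fstar_eq_ereal) (simp add: Fobj_eq_ereal)

lemma Fobj_minus_Fstar: "\<Psi> y \<noteq> \<infinity> \<Longrightarrow> Fobj f \<Psi> y - Fstar = ereal (obj y - obj_min)"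
  by (subst Fstar_eq_ereal) (simp add: Fobj_eq_ereal)

lemma mem_Omega_iff: "y \<in> \<Omega> \<longleftrightarrow> \<Psi> y \<noteq> \<infinity> \<and> obj y = obj_min"
  unfolding \<Omega>_def using Fobj_eq_ereal[of y] Fobj_neq_infinity_iff[of y]
  by (subst Fstar_eq_ereal) auto

lemma Psi_convex_combination:
  assumes "\<Psi> a \<noteq> \<infinity>" "\<Psi> b \<noteq> \<infinity>" "0 \<le> u" "u \<le> 1"
  shows "\<Psi> ((1 - u) *\<^sub>R a + u *\<^sub>R b) \<noteq> \<infinity>"
    and "\<psi> ((1 - u) *\<^sub>R a + u *\<^sub>R b) \<le> (1 - u) * \<psi> a + u * \<psi> b"
proof -
  have "\<Psi> ((1 - u) *\<^sub>R a + u *\<^sub>R b) \<le> ereal (1 - u) * \<Psi> a + ereal u * \<Psi> b"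
    using \<Psi>_convex assms(3,4) unfolding ext_convex_def by blast
  also have "\<dots> = ereal ((1 - u) * \<psi> a + u * \<psi> b)"
    using Psi_eq_ereal[OF assms(1)] Psi_eq_ereal[OF assms(2)]
    by (metis plus_ereal.simps(1) times_ereal.simps(1))
  finally have le: "\<Psi> ((1 - u) *\<^sub>R a + u *\<^sub>R b) \<le> ereal ((1 - u) * \<psi> a + u * \<psi> b)" .
  then show fin: "\<Psi> ((1 - u) *\<^sub>R a + u *\<^sub>R b) \<noteq> \<infinity>" by auto
  show "\<psi> ((1 - u) *\<^sub>R a + u *\<^sub>R b) \<le> (1 - u) * \<psi> a + u * \<psi> b"
    using le Psi_eq_ereal[OF fin] by (metis ereal_less_eq(3))
qed

lemma Psi_convex_along:
  assumes "\<Psi> a \<noteq> \<infinity>" "\<Psi> (a + q) \<noteq> \<infinity>" "0 \<le> s" "s \<le> 1"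
  shows "\<Psi> (a + s *\<^sub>R q) \<noteq> \<infinity>" and "\<psi> (a + s *\<^sub>R q) \<le> (1 - s) * \<psi> a + s * \<psi> (a + q)"
proof -
  have "(1 - s) *\<^sub>R a + s *\<^sub>R (a + q) = a + s *\<^sub>R q" by (simp add: algebra_simps)
  with Psi_convex_combination[OF assms] show "\<Psi> (a + s *\<^sub>R q) \<noteq> \<infinity>"
    and "\<psi> (a + s *\<^sub>R q) \<le> (1 - s) * \<psi> a + s * \<psi> (a + q)" by simp_all
qed

lemma obj_convex_combination:
  assumes "\<Psi> a \<noteq> \<infinity>" "\<Psi> b \<noteq> \<infinity>" "0 \<le> u" "u \<le> 1"
  shows "obj ((1 - u) *\<^sub>R a + u *\<^sub>R b) \<le> (1 - u) * obj a + u * obj b"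
  using Psi_convex_combination(2)[OF assms] convex_onD[OF f_convex, of u a b] assms(3,4)
  by (simp add: algebra_simps)

lemma convex_Omega: "convex \<Omega>"
  unfolding convex_alt
proof (intro ballI allI impI)
  fix a b and u :: real
  assume "a \<in> \<Omega>" "b \<in> \<Omega>" and u: "0 \<le> u \<and> u \<le> 1"
  then have ab: "\<Psi> a \<noteq> \<infinity>" "\<Psi> b \<noteq> \<infinity>" "obj a = obj_min" "obj b = obj_min"
    by (auto simp: mem_Omega_iff)
  have "obj ((1 - u) *\<^sub>R a + u *\<^sub>R b) \<le> obj_min"
    using obj_convex_combination[OF ab(1,2)] u ab(3,4) by (simp add: algebra_simps)
  moreover have fin: "\<Psi> ((1 - u) *\<^sub>R a + u *\<^sub>R b) \<noteq> \<infinity>"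
    using Psi_convex_combination(1)[OF ab(1,2)] u by blast
  ultimately have "obj ((1 - u) *\<^sub>R a + u *\<^sub>R b) = obj_min"
    using obj_min_le[OF fin] by linarith
  with fin show "(1 - u) *\<^sub>R a + u *\<^sub>R b \<in> \<Omega>"
    by (simp add: mem_Omega_iff)
qed

lemma closed_Omega: "closed \<Omega>"
  unfolding closed_sequential_limits
proof (intro allI impI, elim conjE)
  fix ys y assume ys: "\<forall>n. ys n \<in> \<Omega>" and lim: "ys \<longlonglongrightarrow> y"
  have "isCont f y"
    using f_smooth has_derivative_continuous unfolding L_smooth_def by blast
  then have f_lim: "(\<lambda>n. f (ys n)) \<longlonglongrightarrow> f y"
    using isCont_tendsto_compose lim by blast
  have Psi_le: "\<Psi> y \<le> ereal (obj_min - f y + e)" if "e > 0" for e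
  proof -
    have "eventually (\<lambda>n. f y - e < f (ys n)) sequentially"
      using order_tendstoD(1)[OF f_lim] \<open>e > 0\<close> by simp
    then have "eventually (\<lambda>n. ys n \<in> {z. \<Psi> z \<le> ereal (obj_min - f y + e)}) sequentially"
    proof (rule eventually_mono)
      fix n assume "f y - e < f (ys n)"
      moreover have "\<Psi> (ys n) \<noteq> \<infinity>" "obj (ys n) = obj_min" using ys by (auto simp: mem_Omega_iff)
      ultimately have "\<psi> (ys n) \<le> obj_min - f y + e" by simp
      then have "\<Psi> (ys n) \<le> ereal (obj_min - f y + e)"
        using Psi_eq_ereal[OF \<open>\<Psi> (ys n) \<noteq> \<infinity>\<close>] by (metis ereal_less_eq(3))
      then show "ys n \<in> {z. \<Psi> z \<le> ereal (obj_min - f y + e)}" by simp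
    qed
    moreover have "closed {z. \<Psi> z \<le> ereal (obj_min - f y + e)}"
      using \<Psi>_lsc unfolding ext_lsc_def by blast
    ultimately show ?thesis
      using Lim_in_closed_set[OF _ _ trivial_limit_sequentially lim] by blast
  qed
  have "\<Psi> y \<le> ereal (obj_min - f y + 1)" by (rule Psi_le) simp
  then have fin: "\<Psi> y \<noteq> \<infinity>" by auto
  have "\<psi> y \<le> obj_min - f y"
  proof (rule field_le_epsilon)
    fix e :: real assume "0 < e"
    then show "\<psi> y \<le> obj_min - f y + e"
      using Psi_le[OF \<open>0 < e\<close>] Psi_eq_ereal[OF fin] by (metis ereal_less_eq(3))
  qed
  then show "y \<in> \<Omega>"
    using obj_min_le[OF fin] fin by (simp add: mem_Omega_iff)
qed

lemma infdist_Omega: "infdist y \<Omega> = dist y (closest_point \<Omega> y)"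
  using infdist_closest_point[OF closed_Omega \<Omega>_ne] .

lemma closest_point_Omega: "closest_point \<Omega> y \<in> \<Omega>"
  using closest_point_in_set[OF closed_Omega \<Omega>_ne] .

definition qmodel :: "('a \<Rightarrow> 'a) \<Rightarrow> 'a \<Rightarrow> 'a \<Rightarrow> real" where
  "qmodel H a q = g a \<bullet> q + 1/2 * (q \<bullet> H q) + \<psi> (a + q) - \<psi> a"

abbreviation qstar :: "('a \<Rightarrow> 'a) \<Rightarrow> 'a \<Rightarrow> real" where
  "qstar H a \<equiv> real_of_ereal (Qstar g \<Psi> H a)"

lemma Qmodel_eq_ereal:
  "\<Psi> a \<noteq> \<infinity> \<Longrightarrow> \<Psi> (a + q) \<noteq> \<infinity> \<Longrightarrow> Qmodel g \<Psi> H a q = ereal (qmodel H a q)"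
  unfolding Qmodel_def qmodel_def by (subst (1 2) Psi_eq_ereal) simp_all

lemma Qmodel_eq_infinity: "\<Psi> a \<noteq> \<infinity> \<Longrightarrow> \<Psi> (a + q) = \<infinity> \<Longrightarrow> Qmodel g \<Psi> H a q = \<infinity>"
  unfolding Qmodel_def by (subst Psi_eq_ereal) simp_all

lemma Qstar_le_Qmodel: "Qstar g \<Psi> H a \<le> Qmodel g \<Psi> H a q"
  unfolding Qstar_def by (rule INF_lower) simp

lemma Qstar_nonpos: "\<Psi> a \<noteq> \<infinity> \<Longrightarrow> Qstar g \<Psi> H a \<le> 0"
  using Qstar_le_Qmodel[of H a 0] Qmodel_eq_ereal[of a 0 H] by (simp add: zero_ereal_def qmodel_def)

lemma qstar_nonpos: "\<Psi> a \<noteq> \<infinity> \<Longrightarrow> qstar H a \<le> 0"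
  using Qstar_nonpos[of a H] by (cases "Qstar g \<Psi> H a") auto

lemma obj_along_le_qmodel:
  assumes a: "\<Psi> a \<noteq> \<infinity>" "\<Psi> (a + q) \<noteq> \<infinity>" and s: "0 \<le> s" "s \<le> 1" "L * s \<le> m / 2"
    and H: "m * (norm q)\<^sup>2 \<le> q \<bullet> H q"
  shows "\<Psi> (a + s *\<^sub>R q) \<noteq> \<infinity>" and "obj (a + s *\<^sub>R q) \<le> obj a + s * qmodel H a q"
proof -
  show "\<Psi> (a + s *\<^sub>R q) \<noteq> \<infinity>" using Psi_convex_along(1)[OF a s(1,2)] .
  have "f (a + s *\<^sub>R q) \<le> f a + s * (g a \<bullet> q) + L * s\<^sup>2 * (norm q)\<^sup>2"
    using L_smooth_taylor_bound[OF f_smooth, of "a + s *\<^sub>R q" a] L_pos s(1)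
    by (simp add: power_mult_distrib abs_le_iff)
  also have "L * s\<^sup>2 * (norm q)\<^sup>2 = s * ((L * s) * (norm q)\<^sup>2)"
    by (simp add: power2_eq_square)
  also have "\<dots> \<le> s * (1/2 * (q \<bullet> H q))"
    using s H mult_right_mono[OF s(3), of "(norm q)\<^sup>2"] by (intro mult_left_mono) auto
  finally show "obj (a + s *\<^sub>R q) \<le> obj a + s * qmodel H a q"
    using Psi_convex_along(2)[OF a s(1,2)] by (simp add: qmodel_def algebra_simps)
qed

lemma Qstar_eq_ereal:
  assumes a: "\<Psi> a \<noteq> \<infinity>" and H: "0 < m" "\<And>v. m * (norm v)\<^sup>2 \<le> v \<bullet> H v"
  shows "Qstar g \<Psi> H a = ereal (qstar H a)"
proof -
  define s where "s = min 1 (m / (2 * L))"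
  have s: "0 < s" "s \<le> 1" "L * s \<le> m / 2"
    using L_pos H(1) by (auto simp: s_def min_def field_simps)
  have "ereal (- (obj a - obj_min) / s) \<le> Qmodel g \<Psi> H a q" for q
  proof (cases "\<Psi> (a + q) = \<infinity>")
    case True
    then show ?thesis using Qmodel_eq_infinity[OF a] by simp
  next
    case False
    note step = obj_along_le_qmodel[of a q s m H, OF a False less_imp_le[OF s(1)] s(2,3) H(2)]
    have "obj_min \<le> obj a + s * qmodel H a q"
      using obj_min_le[OF step(1)] step(2) by linarith
    then have "- (obj a - obj_min) / s \<le> qmodel H a q"
      using s(1) by (simp add: divide_le_eq mult.commute)
    then show ?thesis using Qmodel_eq_ereal[OF a False] by simp
  qed
  then have "ereal (- (obj a - obj_min) / s) \<le> Qstar g \<Psi> H a"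
    unfolding Qstar_def by (rule INF_greatest)
  with Qstar_nonpos[OF a, of H] show ?thesis by (cases "Qstar g \<Psi> H a") auto
qed

lemma qstar_le_qmodel:
  assumes "\<Psi> a \<noteq> \<infinity>" "\<Psi> (a + q) \<noteq> \<infinity>" "0 < m" "\<And>v. m * (norm v)\<^sup>2 \<le> v \<bullet> H v"
  shows "qstar H a \<le> qmodel H a q"
  using Qstar_le_Qmodel[of H a q] Qstar_eq_ereal[OF assms(1,3,4)] Qmodel_eq_ereal[OF assms(1,2)]
  by (metis ereal_less_eq(3))

lemma qstar_le_half_step:
  assumes a: "\<Psi> a \<noteq> \<infinity>" "\<Psi> (a + q) \<noteq> \<infinity>"
    and H: "linear H" "0 < m" "\<And>v. m * (norm v)\<^sup>2 \<le> v \<bullet> H v"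
  shows "qstar H a \<le> qmodel H a q / 2 - (q \<bullet> H q) / 8"
proof -
  have half: "\<Psi> (a + (1/2) *\<^sub>R q) \<noteq> \<infinity>" "\<psi> (a + (1/2) *\<^sub>R q) \<le> \<psi> a / 2 + \<psi> (a + q) / 2"
    using Psi_convex_along[OF a, of "1/2"] by simp_all
  have "qstar H a \<le> qmodel H a ((1/2) *\<^sub>R q)"
    by (rule qstar_le_qmodel[OF a(1) half(1) H(2,3)])
  also have "\<dots> = 1/2 * (g a \<bullet> q) + 1/8 * (q \<bullet> H q) + \<psi> (a + (1/2) *\<^sub>R q) - \<psi> a"
    using linear_cmul[OF H(1), of "1/2" q] by (simp add: qmodel_def)
  finally show ?thesis
    using half(2) by (simp add: qmodel_def add_divide_distrib diff_divide_distrib)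
qed

lemma qstar_le_toward_Omega:
  assumes a: "\<Psi> y \<noteq> \<infinity>" and s: "0 \<le> s" "s \<le> 1"
    and H: "linear H" "0 < m" "\<And>v. m * (norm v)\<^sup>2 \<le> v \<bullet> H v" "\<And>v. v \<bullet> H v \<le> M * (norm v)\<^sup>2"
  shows "qstar H y \<le> - s * (obj y - obj_min) + s\<^sup>2 * M * (infdist y \<Omega>)\<^sup>2 / 2"
proof -
  define w where "w = closest_point \<Omega> y"
  define h where "h = w - y"
  have w: "\<Psi> w \<noteq> \<infinity>" "obj w = obj_min" and yh: "y + h = w"
    using closest_point_Omega[of y] by (auto simp: mem_Omega_iff w_def h_def)
  note along = Psi_convex_along[OF a, of h s, unfolded yh, OF w(1) s]
  have "qstar H y \<le> qmodel H y (s *\<^sub>R h)"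
    using qstar_le_qmodel[OF a along(1) H(2,3)] .
  also have "\<dots> = s * (g y \<bullet> h) + s\<^sup>2 / 2 * (h \<bullet> H h) + \<psi> (y + s *\<^sub>R h) - \<psi> y"
    using linear_cmul[OF H(1), of s h] by (simp add: qmodel_def power2_eq_square)
  also have "\<dots> \<le> s * (f w - f y) + s\<^sup>2 / 2 * (M * (norm h)\<^sup>2) + s * (\<psi> w - \<psi> y)"
  proof -
    have "s * (g y \<bullet> h) \<le> s * (f w - f y)"
      using L_smooth_convex_gradient_ineq[OF f_smooth _ f_convex, of y w] L_pos s(1)
      by (intro mult_left_mono) (auto simp: h_def)
    moreover have "s\<^sup>2 / 2 * (h \<bullet> H h) \<le> s\<^sup>2 / 2 * (M * (norm h)\<^sup>2)"
      using H(4) by (intro mult_left_mono) auto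
    ultimately show ?thesis using along(2) by (simp add: algebra_simps)
  qed
  also have "\<dots> = - s * (obj y - obj_min) + s\<^sup>2 * M * (infdist y \<Omega>)\<^sup>2 / 2"
    using w(2)[symmetric] infdist_Omega[of y]
    by (simp add: w_def h_def dist_norm norm_minus_commute algebra_simps)
  finally show ?thesis .
qed

end

locale convex_composite_error_bound = convex_composite +
  fixes \<xi> \<zeta> \<theta> :: real
  assumes \<xi>_pos: "0 < \<xi>" and \<zeta>_pos: "0 < \<zeta>" and \<theta>_gt: "1/4 < \<theta>"
    and error_bound: "\<And>y. Fobj f \<Psi> y - Fstar \<le> ereal \<xi> \<Longrightarrow>
                        \<zeta> * infdist y \<Omega> \<le> (real_of_ereal (Fobj f \<Psi> y - Fstar)) powr \<theta>"
begin

lemma error_bound_obj: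
  assumes "\<Psi> y \<noteq> \<infinity>" "obj y - obj_min \<le> \<xi>"
  shows "\<zeta> * infdist y \<Omega> \<le> (obj y - obj_min) powr \<theta>"
  using error_bound[of y] assms by (simp add: Fobj_minus_Fstar)

text \<open>With \<open>w\<close> the projection of \<open>y\<close> onto \<open>\<Omega>\<close> and \<open>D = F(y) - F\<^sup>*\<close>, convexity of \<open>F\<close> gives
  \<open>F(z) - F\<^sup>* \<le> \<xi>\<close> at \<open>z = w + (\<xi>/D)(y - w)\<close>; the error bound applies at \<open>z\<close>, and
  \<open>dist(z, \<Omega>) = (\<xi>/D) dist(y, \<Omega>)\<close>.\<close>

lemma infdist_le_far:
  assumes y: "\<Psi> y \<noteq> \<infinity>" and far: "\<xi> < obj y - obj_min"
  shows "infdist y \<Omega> \<le> \<xi> powr \<theta> / (\<zeta> * \<xi>) * (obj y - obj_min)"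
proof -
  define D where "D = obj y - obj_min"
  define l where "l = \<xi> / D"
  define w where "w = closest_point \<Omega> y"
  define z where "z = w + l *\<^sub>R (y - w)"
  have D: "0 < D" using far \<xi>_pos by (simp add: D_def)
  have l: "0 < l" "l \<le> 1" "l * D = \<xi>" using D far \<xi>_pos by (auto simp: l_def D_def)
  have w: "\<Psi> w \<noteq> \<infinity>" "obj w = obj_min"
    using closest_point_Omega[of y] by (auto simp: mem_Omega_iff w_def)
  have z: "z = (1 - l) *\<^sub>R w + l *\<^sub>R y" by (simp add: z_def algebra_simps)
  have z_fin: "\<Psi> z \<noteq> \<infinity>" using Psi_convex_combination(1)[OF w(1) y] l z by simp
  have "obj z \<le> (1 - l) * obj w + l * obj y"
    using obj_convex_combination[OF w(1) y] l z by simp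
  then have z_gap: "obj z - obj_min \<le> \<xi>"
    using w(2) l(3) by (simp add: D_def algebra_simps)
  have "\<zeta> * (l * infdist y \<Omega>) = \<zeta> * infdist z \<Omega>"
    using infdist_segment_to_closest_point[OF convex_Omega closed_Omega \<Omega>_ne, of l y] l
    by (simp add: z_def w_def)
  also have "\<dots> \<le> (obj z - obj_min) powr \<theta>"
    by (rule error_bound_obj[OF z_fin z_gap])
  also have "\<dots> \<le> \<xi> powr \<theta>"
    using obj_min_le[OF z_fin] z_gap \<theta>_gt by (intro powr_mono2) auto
  finally have "infdist y \<Omega> * (\<zeta> * l) \<le> \<xi> powr \<theta>" by (simp add: algebra_simps)
  then have "infdist y \<Omega> \<le> \<xi> powr \<theta> / (\<zeta> * l)"
    using l \<zeta>_pos by (simp add: pos_le_divide_eq)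
  also have "\<dots> = \<xi> powr \<theta> / (\<zeta> * \<xi>) * D"
    using D \<xi>_pos \<zeta>_pos by (simp add: l_def field_simps)
  finally show ?thesis by (simp add: D_def)
qed

text \<open>Near \<open>\<Omega>\<close> the error bound is used through its fourth power; this is where \<open>\<theta> > 1/4\<close>
  enters.\<close>

lemma infdist_pow4_le_near:
  assumes y: "\<Psi> y \<noteq> \<infinity>" and near: "obj y - obj_min \<le> \<xi>"
  shows "infdist y \<Omega> ^ 4 \<le> \<xi> powr (4 * \<theta> - 1) / \<zeta> ^ 4 * (obj y - obj_min)"
proof -
  define D where "D = obj y - obj_min"
  have D: "0 \<le> D" using obj_min_le[OF y] by (simp add: D_def)
  have eb: "\<zeta> * infdist y \<Omega> \<le> D powr \<theta>"
    using error_bound_obj[OF y near] by (simp add: D_def)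
  show ?thesis
  proof (cases "D = 0")
    case True
    then have "infdist y \<Omega> = 0"
      using eb \<zeta>_pos infdist_nonneg[of y \<Omega>] by (simp add: mult_le_0_iff)
    then show ?thesis using True by (simp add: D_def)
  next
    case False
    have "(\<zeta> * infdist y \<Omega>) ^ 4 \<le> (D powr \<theta>) ^ 4"
      using eb \<zeta>_pos infdist_nonneg[of y \<Omega>] by (intro power_mono) auto
    also have "\<dots> = D powr (4 * \<theta>)"
      using powr_power[of D \<theta> 4] False by simp
    also have "\<dots> = D * D powr (4 * \<theta> - 1)"
      using powr_mult_base[of D "4 * \<theta> - 1"] D by simp
    also have "\<dots> \<le> D * \<xi> powr (4 * \<theta> - 1)"
      using D near \<theta>_gt by (intro mult_left_mono powr_mono2) (auto simp: D_def)
    finally have "infdist y \<Omega> ^ 4 * \<zeta> ^ 4 \<le> \<xi> powr (4 * \<theta> - 1) * D"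
      by (simp add: algebra_simps)
    then show ?thesis
      using \<zeta>_pos by (simp add: pos_le_divide_eq D_def algebra_simps)
  qed
qed

lemma infdist_sq_le_near:
  assumes y: "\<Psi> y \<noteq> \<infinity>" and near: "obj y - obj_min \<le> \<xi>"
  shows "(infdist y \<Omega>)\<^sup>2 \<le> sqrt (\<xi> powr (4 * \<theta> - 1) / \<zeta> ^ 4) * sqrt (obj y - obj_min)"
proof -
  define B where "B = \<xi> powr (4 * \<theta> - 1) / \<zeta> ^ 4"
  have B: "0 \<le> B" by (simp add: B_def)
  have D: "0 \<le> obj y - obj_min" using obj_min_le[OF y] by simp
  have "((infdist y \<Omega>)\<^sup>2)\<^sup>2 = infdist y \<Omega> ^ 4"
    by (simp add: power_mult[symmetric])
  also have "\<dots> \<le> B * (obj y - obj_min)"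
    using infdist_pow4_le_near[OF y near] by (simp add: B_def)
  also have "\<dots> = (sqrt B * sqrt (obj y - obj_min))\<^sup>2"
    using B D by (simp only: power_mult_distrib real_sqrt_pow2)
  finally show ?thesis
    unfolding B_def[symmetric] by (rule power2_le_imp_le) (use B D in simp)
qed

end

locale isqa = convex_composite_error_bound +
  fixes m M \<eta> \<gamma> \<beta> :: real and H :: "nat \<Rightarrow> 'a \<Rightarrow> 'a"
    and x p :: "nat \<Rightarrow> 'a" and \<alpha> :: "nat \<Rightarrow> real"
  assumes \<gamma>: "0 < \<gamma>" "\<gamma> < 1" and \<beta>: "0 < \<beta>" "\<beta> < 1"
    and x0_dom: "\<Psi> (x 0) \<noteq> \<infinity>"
    and mM: "0 < m" "m \<le> M"
    and H_lin: "\<And>t. linear (H t)"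
    and H_bounds: "\<And>t v. m * (norm v)\<^sup>2 \<le> v \<bullet> H t v \<and> v \<bullet> H t v \<le> M * (norm v)\<^sup>2"
    and \<eta>: "0 \<le> \<eta>" "\<eta> < 1"
    and inexact: "\<And>t. Qmodel g \<Psi> (H t) (x t) (p t) - Qstar g \<Psi> (H t) (x t)
                        \<le> - ereal \<eta> * Qstar g \<Psi> (H t) (x t)"
    and armijo: "\<And>t. \<alpha> t = \<beta> ^ (LEAST k. Fobj f \<Psi> (x t + (\<beta> ^ k) *\<^sub>R p t)
                        \<le> Fobj f \<Psi> (x t) + ereal (\<gamma> * \<beta> ^ k) * Qmodel g \<Psi> (H t) (x t) (p t))"
    and x_step: "\<And>t. x (Suc t) = x t + \<alpha> t *\<^sub>R p t"
begin

abbreviation gap :: "nat \<Rightarrow> real" where "gap t \<equiv> obj (x t) - obj_min"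
abbreviation qp :: "nat \<Rightarrow> real" where "qp t \<equiv> qmodel (H t) (x t) (p t)"
abbreviation qs :: "nat \<Rightarrow> real" where "qs t \<equiv> qstar (H t) (x t)"

lemma H_lower: "m * (norm v)\<^sup>2 \<le> v \<bullet> H t v"
  using H_bounds by blast

lemma H_upper: "v \<bullet> H t v \<le> M * (norm v)\<^sup>2"
  using H_bounds by blast

lemma inexact_model:
  assumes xt: "\<Psi> (x t) \<noteq> \<infinity>"
  shows "\<Psi> (x t + p t) \<noteq> \<infinity>" and "qs t \<le> qp t" and "qp t \<le> (1 - \<eta>) * qs t"
proof -
  obtain c where Qs: "Qstar g \<Psi> (H t) (x t) = ereal c"
    using Qstar_eq_ereal[of "x t" m "H t", OF xt mM(1) H_lower] by blast
  then have c: "qs t = c" by simp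
  have Qp: "Qmodel g \<Psi> (H t) (x t) (p t) \<le> ereal ((1 - \<eta>) * c)"
    using inexact[of t] unfolding Qs
    by (cases "Qmodel g \<Psi> (H t) (x t) (p t)") (auto simp: algebra_simps)
  then show fin: "\<Psi> (x t + p t) \<noteq> \<infinity>"
    using Qmodel_eq_infinity[OF xt, of "p t" "H t"] by auto
  show "qs t \<le> qp t"
    using qstar_le_qmodel[of "x t" "p t" m "H t", OF xt fin mM(1) H_lower] .
  show "qp t \<le> (1 - \<eta>) * qs t"
    using Qp Qmodel_eq_ereal[OF xt fin] c by simp
qed

lemma qp_nonpos:
  assumes "\<Psi> (x t) \<noteq> \<infinity>"
  shows "qp t \<le> 0"
proof -
  have "(1 - \<eta>) * qs t \<le> 0"
    using qstar_nonpos[OF assms] \<eta> by (simp add: mult_nonneg_nonpos)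
  then show ?thesis using inexact_model(3)[OF assms] by linarith
qed

lemma norm_direction_sq_le:
  assumes xt: "\<Psi> (x t) \<noteq> \<infinity>"
  shows "m * (1 - \<eta>) * (norm (p t))\<^sup>2 \<le> 8 * (- qp t)"
proof -
  have "qs t \<le> qp t / 2 - (p t \<bullet> H t (p t)) / 8"
    using qstar_le_half_step[of "x t" "p t" "H t" m, OF xt inexact_model(1)[OF xt] H_lin mM(1) H_lower] .
  then have "(1 - \<eta>) * (p t \<bullet> H t (p t)) \<le> (1 - \<eta>) * (4 * qp t - 8 * qs t)"
    using \<eta> by (intro mult_left_mono) auto
  moreover have "(1 - \<eta>) * (m * (norm (p t))\<^sup>2) \<le> (1 - \<eta>) * (p t \<bullet> H t (p t))"
    using \<eta> H_lower by (intro mult_left_mono) auto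
  moreover have "(1 - \<eta>) * qp t \<le> 0"
    using \<eta> qp_nonpos[OF xt] by (simp add: mult_nonneg_nonpos)
  ultimately show ?thesis
    using inexact_model(3)[OF xt] by (simp add: algebra_simps)
qed

definition step_floor :: real where
  "step_floor = \<beta> ^ (LEAST k. \<beta> ^ k \<le> min 1 (m / (2 * L)))"

lemma step_floor_bounds: "0 < step_floor" "step_floor \<le> 1" "L * step_floor \<le> m / 2"
proof -
  obtain n where "\<beta> ^ n < min 1 (m / (2 * L))"
    using real_arch_pow_inv[of "min 1 (m / (2 * L))" \<beta>] \<beta> mM(1) L_pos by auto
  then have "\<beta> ^ n \<le> min 1 (m / (2 * L))" by simp
  then have "step_floor \<le> min 1 (m / (2 * L))"
    unfolding step_floor_def by (rule LeastI)
  then show "step_floor \<le> 1" "L * step_floor \<le> m / 2"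
    using L_pos by (auto simp: field_simps)
  show "0 < step_floor" using \<beta> by (simp add: step_floor_def)
qed

lemma armijo_condition:
  assumes xt: "\<Psi> (x t) \<noteq> \<infinity>" and s: "0 < s" "s \<le> 1" "L * s \<le> m / 2"
  shows "Fobj f \<Psi> (x t + s *\<^sub>R p t)
           \<le> Fobj f \<Psi> (x t) + ereal (\<gamma> * s) * Qmodel g \<Psi> (H t) (x t) (p t)"
proof -
  note pt = inexact_model(1)[OF xt]
  note step = obj_along_le_qmodel[of "x t" "p t" s m "H t",
      OF xt pt less_imp_le[OF s(1)] s(2,3) H_lower]
  have "(1 - \<gamma>) * s * qp t \<le> 0"
    using \<gamma> s(1) qp_nonpos[OF xt] by (simp add: mult_nonneg_nonpos)
  then have "s * qp t \<le> \<gamma> * s * qp t"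
    by (simp add: algebra_simps)
  then have "obj (x t + s *\<^sub>R p t) \<le> obj (x t) + \<gamma> * s * qp t"
    using step(2) by linarith
  then show ?thesis
    using Fobj_eq_ereal[OF step(1)] Fobj_eq_ereal[OF xt] Qmodel_eq_ereal[OF xt pt] by simp
qed

lemma armijo_step:
  assumes xt: "\<Psi> (x t) \<noteq> \<infinity>"
  shows "step_floor \<le> \<alpha> t" and "\<alpha> t \<le> 1" and "\<Psi> (x (Suc t)) \<noteq> \<infinity>"
    and "obj (x (Suc t)) \<le> obj (x t) + \<gamma> * \<alpha> t * qp t"
proof -
  define P where "P k \<longleftrightarrow> Fobj f \<Psi> (x t + (\<beta> ^ k) *\<^sub>R p t)
                        \<le> Fobj f \<Psi> (x t) + ereal (\<gamma> * \<beta> ^ k) * Qmodel g \<Psi> (H t) (x t) (p t)" for k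
  define k0 where "k0 = (LEAST k. \<beta> ^ k \<le> min 1 (m / (2 * L)))"
  have "P k0"
    unfolding P_def using armijo_condition[OF xt] step_floor_bounds by (simp add: step_floor_def k0_def)
  define k where "k = (LEAST k. P k)"
  have "P k" "k \<le> k0"
    unfolding k_def using \<open>P k0\<close> by (auto intro: LeastI Least_le)
  have \<alpha>: "\<alpha> t = \<beta> ^ k"
    using armijo[of t] by (simp add: P_def k_def)
  show "step_floor \<le> \<alpha> t"
    unfolding \<alpha> step_floor_def k0_def[symmetric] using \<open>k \<le> k0\<close> \<beta> by (intro power_decreasing) auto
  show "\<alpha> t \<le> 1"
    unfolding \<alpha> using \<beta> by (simp add: power_le_one)
  have le: "Fobj f \<Psi> (x (Suc t)) \<le> ereal (obj (x t) + \<gamma> * \<alpha> t * qp t)"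
    using \<open>P k\<close> unfolding P_def \<alpha>[symmetric] x_step[symmetric]
    by (simp add: Fobj_eq_ereal[OF xt] Qmodel_eq_ereal[OF xt inexact_model(1)[OF xt]])
  then have "Fobj f \<Psi> (x (Suc t)) \<noteq> \<infinity>" by auto
  then show fin: "\<Psi> (x (Suc t)) \<noteq> \<infinity>"
    using Fobj_neq_infinity_iff by blast
  show "obj (x (Suc t)) \<le> obj (x t) + \<gamma> * \<alpha> t * qp t"
    using le Fobj_eq_ereal[OF fin] by simp
qed

lemma Psi_x_finite: "\<Psi> (x t) \<noteq> \<infinity>"
  by (induction t) (use x0_dom armijo_step(3) in auto)

lemma gap_nonneg: "0 \<le> gap t"
  using obj_min_le[OF Psi_x_finite] by simp

lemma gap_decrease: "\<gamma> * step_floor * (- qp t) \<le> gap t - gap (Suc t)"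
proof -
  have "\<gamma> * step_floor * (- qp t) \<le> \<gamma> * \<alpha> t * (- qp t)"
    using armijo_step(1)[OF Psi_x_finite] qp_nonpos[OF Psi_x_finite] \<gamma>
    by (intro mult_right_mono mult_left_mono) auto
  then show ?thesis using armijo_step(4)[OF Psi_x_finite, of t] by (simp add: algebra_simps)
qed

lemma gap_Suc_le: "gap (Suc t) \<le> gap t"
proof -
  have "0 \<le> \<gamma> * step_floor * (- qp t)"
    using qp_nonpos[OF Psi_x_finite, of t] step_floor_bounds(1) \<gamma>(1) by (intro mult_nonneg_nonneg) auto
  then show ?thesis using gap_decrease[of t] by linarith
qed

lemma gap_decrease_qs:
  obtains c where "0 < c" and "\<And>t. c * (- qs t) \<le> gap t - gap (Suc t)"
proof
  show "0 < \<gamma> * step_floor * (1 - \<eta>)" using \<gamma> step_floor_bounds(1) \<eta> by simp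
  fix t
  have "(1 - \<eta>) * (- qs t) \<le> - qp t" using inexact_model(3)[OF Psi_x_finite, of t] by simp
  then have "\<gamma> * step_floor * ((1 - \<eta>) * (- qs t)) \<le> \<gamma> * step_floor * (- qp t)"
    using \<gamma> step_floor_bounds(1) by (intro mult_left_mono) auto
  then show "\<gamma> * step_floor * (1 - \<eta>) * (- qs t) \<le> gap t - gap (Suc t)"
    using gap_decrease[of t] by (simp add: mult.assoc)
qed

lemma step_norm_sq_le:
  obtains K where "0 < K" and "\<And>t. (norm (x (Suc t) - x t))\<^sup>2 \<le> K * (gap t - gap (Suc t))"
proof
  define c where "c = m * (1 - \<eta>) * (\<gamma> * step_floor)"
  have c: "0 < c" using mM(1) \<eta> \<gamma> step_floor_bounds(1) by (simp add: c_def)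
  show "0 < 8 / c" using c by simp
  fix t
  note xt = Psi_x_finite[of t]
  have "norm (x (Suc t) - x t) \<le> norm (p t)"
    using armijo_step(1,2)[OF xt] step_floor_bounds(1) by (simp add: x_step mult_left_le_one_le)
  then have "c * (norm (x (Suc t) - x t))\<^sup>2 \<le> c * (norm (p t))\<^sup>2"
    using c by (intro mult_left_mono power_mono) auto
  also have "\<dots> = (\<gamma> * step_floor) * (m * (1 - \<eta>) * (norm (p t))\<^sup>2)"
    by (simp add: c_def algebra_simps)
  also have "\<dots> \<le> (\<gamma> * step_floor) * (8 * (- qp t))"
    using norm_direction_sq_le[OF xt] \<gamma> step_floor_bounds(1) by (intro mult_left_mono) auto
  also have "\<dots> = 8 * (\<gamma> * step_floor * (- qp t))"
    by simp
  also have "\<dots> \<le> 8 * (gap t - gap (Suc t))"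
    using gap_decrease[of t] by simp
  finally show "(norm (x (Suc t) - x t))\<^sup>2 \<le> 8 / c * (gap t - gap (Suc t))"
    using c by (simp add: field_simps)
qed

lemma qs_le_far:
  obtains \<omega> where "0 < \<omega>" and "\<And>t. \<xi> < gap t \<Longrightarrow> qs t \<le> - \<omega>"
proof
  define E where "E = \<xi> powr \<theta> / (\<zeta> * \<xi>)"
  have E: "0 < E" using \<xi>_pos \<zeta>_pos by (simp add: E_def)
  have M: "0 < M" using mM by simp
  show "0 < min (1 / (2 * M * E\<^sup>2)) (\<xi> / 2)" using E M \<xi>_pos by simp
  fix t assume far: "\<xi> < gap t"
  note xt = Psi_x_finite[of t]
  have D: "0 < gap t" using far \<xi>_pos by linarith
  have "infdist (x t) \<Omega> \<le> E * gap t"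
    using infdist_le_far[OF xt far] by (simp add: E_def)
  then have "(infdist (x t) \<Omega>)\<^sup>2 \<le> (E * gap t)\<^sup>2"
    using infdist_nonneg by (intro power_mono)
  then have d2: "(infdist (x t) \<Omega>)\<^sup>2 \<le> E\<^sup>2 * (gap t)\<^sup>2"
    by (simp add: power_mult_distrib)
  have "qs t \<le> - min ((gap t)\<^sup>2 / (2 * (M * E\<^sup>2 * (gap t)\<^sup>2))) (gap t / 2)"
  proof (rule le_neg_min_of_quadratic_bound)
    fix s :: real assume s: "0 \<le> s" "s \<le> 1"
    have "s\<^sup>2 * M * (infdist (x t) \<Omega>)\<^sup>2 \<le> s\<^sup>2 * M * (E\<^sup>2 * (gap t)\<^sup>2)"
      using d2 M by (intro mult_left_mono) auto
    then show "qs t \<le> - s * gap t + s\<^sup>2 * (M * E\<^sup>2 * (gap t)\<^sup>2) / 2"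
      using qstar_le_toward_Omega[of "x t" s "H t" m M, OF xt s H_lin mM(1) H_lower H_upper] by linarith
  qed (use D M in auto)
  also have "(gap t)\<^sup>2 / (2 * (M * E\<^sup>2 * (gap t)\<^sup>2)) = 1 / (2 * M * E\<^sup>2)"
    using D by simp
  also have "- min (1 / (2 * M * E\<^sup>2)) (gap t / 2) \<le> - min (1 / (2 * M * E\<^sup>2)) (\<xi> / 2)"
    using far by simp
  finally show "qs t \<le> - min (1 / (2 * M * E\<^sup>2)) (\<xi> / 2)" .
qed

lemma qs_le_near:
  obtains \<kappa> where "0 < \<kappa>" and "\<And>t. gap t \<le> \<xi> \<Longrightarrow> qs t \<le> - \<kappa> * sqrt (gap t) ^ 3"
proof
  define b where "b = sqrt (\<xi> powr (4 * \<theta> - 1) / \<zeta> ^ 4)"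
  have b: "0 < b" using \<xi>_pos \<zeta>_pos by (simp add: b_def)
  have M: "0 < M" using mM by simp
  define \<kappa> where "\<kappa> = min (1 / (2 * (M * b))) (1 / (2 * sqrt \<xi>))"
  show "0 < \<kappa>" using b M \<xi>_pos by (simp add: \<kappa>_def)
  fix t assume near: "gap t \<le> \<xi>"
  note xt = Psi_x_finite[of t]
  define r where "r = sqrt (gap t)"
  have r: "0 \<le> r" "r\<^sup>2 = gap t" "r \<le> sqrt \<xi>"
    using gap_nonneg[of t] near by (auto simp: r_def)
  have d2: "(infdist (x t) \<Omega>)\<^sup>2 \<le> b * r"
    using infdist_sq_le_near[OF xt near] by (simp add: b_def r_def)
  have "qs t \<le> - min ((r\<^sup>2)\<^sup>2 / (2 * (M * b * r))) (r\<^sup>2 / 2)"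
  proof (rule le_neg_min_of_quadratic_bound)
    fix s :: real assume s: "0 \<le> s" "s \<le> 1"
    have "s\<^sup>2 * M * (infdist (x t) \<Omega>)\<^sup>2 \<le> s\<^sup>2 * M * (b * r)"
      using d2 M by (intro mult_left_mono) auto
    then show "qs t \<le> - s * r\<^sup>2 + s\<^sup>2 * (M * b * r) / 2"
      using qstar_le_toward_Omega[of "x t" s "H t" m M, OF xt s H_lin mM(1) H_lower H_upper]
      unfolding r(2) by linarith
  qed (use r b M gap_nonneg[of t] in auto)
  also have "\<dots> \<le> - \<kappa> * r ^ 3"
    using cubic_le_min_quartic_quadratic[OF r(1,3), of "M * b"] b M \<xi>_pos
    by (simp add: \<kappa>_def mult.assoc)
  finally show "qs t \<le> - \<kappa> * sqrt (gap t) ^ 3" by (simp add: r_def)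
qed

lemma gap_converges:
  obtains l where "(\<lambda>t. gap t) \<longlonglongrightarrow> l" and "0 \<le> l"
proof -
  have "decseq (\<lambda>t. gap t)" using gap_Suc_le by (intro decseq_SucI)
  then obtain l where "(\<lambda>t. gap t) \<longlonglongrightarrow> l" "\<forall>t. l \<le> gap t"
    using decseq_convergent[of "\<lambda>t. gap t" 0] gap_nonneg by blast
  then show thesis using LIMSEQ_le_const[of "\<lambda>t. gap t" l 0] gap_nonneg by (intro that) auto
qed

lemma gap_diff_tendsto_zero: "(\<lambda>t. gap t - gap (Suc t)) \<longlonglongrightarrow> 0"
proof -
  obtain l where "(\<lambda>t. gap t) \<longlonglongrightarrow> l" using gap_converges by blast
  from tendsto_diff[OF this LIMSEQ_Suc[OF this]] show ?thesis by simp
qed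

lemma eventually_gap_le: "\<exists>T. \<forall>t\<ge>T. gap t \<le> \<xi>"
proof -
  have "\<exists>T. gap T \<le> \<xi>"
  proof (rule ccontr)
    assume "\<nexists>T. gap T \<le> \<xi>"
    then have far: "\<xi> < gap t" for t by (simp add: not_le)
    obtain c where c: "0 < c" "\<And>t. c * (- qs t) \<le> gap t - gap (Suc t)"
      using gap_decrease_qs by blast
    obtain \<omega> where \<omega>: "0 < \<omega>" "\<And>t. \<xi> < gap t \<Longrightarrow> qs t \<le> - \<omega>"
      using qs_le_far by blast
    have "c * \<omega> \<le> gap t - gap (Suc t)" for t
    proof -
      have "\<omega> \<le> - qs t" using \<omega>(2)[OF far[of t]] by linarith
      then have "c * \<omega> \<le> c * (- qs t)" using c(1) by (intro mult_left_mono) auto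
      then show ?thesis using c(2)[of t] by linarith
    qed
    then have "c * \<omega> \<le> 0"
      using LIMSEQ_le_const[OF gap_diff_tendsto_zero] by blast
    then show False using c(1) \<omega>(1) by (simp add: mult_le_0_iff)
  qed
  then obtain T where "gap T \<le> \<xi>" by blast
  then have "gap t \<le> \<xi>" if "T \<le> t" for t
    using lift_Suc_antimono_le[of "\<lambda>t. gap t", OF gap_Suc_le that] by simp
  then show ?thesis by blast
qed

lemma gap_decrease_near:
  obtains c where "0 < c" and "\<And>t. gap t \<le> \<xi> \<Longrightarrow> c * sqrt (gap t) ^ 3 \<le> gap t - gap (Suc t)"
proof -
  obtain c where c: "0 < c" "\<And>t. c * (- qs t) \<le> gap t - gap (Suc t)"
    using gap_decrease_qs by blast
  obtain \<kappa> where \<kappa>: "0 < \<kappa>" "\<And>t. gap t \<le> \<xi> \<Longrightarrow> qs t \<le> - \<kappa> * sqrt (gap t) ^ 3"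
    using qs_le_near by blast
  show thesis
  proof
    show "0 < c * \<kappa>" using c(1) \<kappa>(1) by simp
    fix t assume "gap t \<le> \<xi>"
    then have "\<kappa> * sqrt (gap t) ^ 3 \<le> - qs t" using \<kappa>(2)[of t] by linarith
    then have "c * (\<kappa> * sqrt (gap t) ^ 3) \<le> c * (- qs t)"
      using c(1) by (intro mult_left_mono) auto
    then show "c * \<kappa> * sqrt (gap t) ^ 3 \<le> gap t - gap (Suc t)"
      using c(2)[of t] by (simp add: mult.assoc)
  qed
qed

lemma gap_tendsto_zero: "(\<lambda>t. gap t) \<longlonglongrightarrow> 0"
proof -
  obtain l where l: "(\<lambda>t. gap t) \<longlonglongrightarrow> l" "0 \<le> l" using gap_converges by blast
  obtain c where c: "0 < c" "\<And>t. gap t \<le> \<xi> \<Longrightarrow> c * sqrt (gap t) ^ 3 \<le> gap t - gap (Suc t)"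
    using gap_decrease_near by blast
  have "(\<lambda>t. c * sqrt (gap t) ^ 3) \<longlonglongrightarrow> c * sqrt l ^ 3"
    by (intro tendsto_intros l(1))
  then have "c * sqrt l ^ 3 \<le> 0"
    using LIMSEQ_le[OF _ gap_diff_tendsto_zero] eventually_gap_le c(2) by blast
  then have "l = 0" using c(1) l(2) by (simp add: mult_le_0_iff)
  then show ?thesis using l(1) by simp
qed

lemma summable_step_norms: "summable (\<lambda>t. norm (x (Suc t) - x t))"
proof -
  define u where "u t = sqrt (sqrt (gap t))" for t
  have u: "0 \<le> u t" "u t ^ 4 = gap t" "u t ^ 6 = sqrt (gap t) ^ 3" "u (Suc t) \<le> u t" for t
  proof -
    have "u t ^ 4 = (u t)\<^sup>2 ^ 2" and "u t ^ 6 = (u t)\<^sup>2 ^ 3"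
      by (simp_all flip: power_mult)
    then show "u t ^ 4 = gap t" "u t ^ 6 = sqrt (gap t) ^ 3"
      using gap_nonneg[of t] by (simp_all add: u_def)
    show "0 \<le> u t" "u (Suc t) \<le> u t"
      using gap_nonneg gap_Suc_le[of t] by (simp_all add: u_def)
  qed
  obtain T where T: "\<And>t. T \<le> t \<Longrightarrow> gap t \<le> \<xi>" using eventually_gap_le by blast
  obtain K where K: "0 < K" "\<And>t. (norm (x (Suc t) - x t))\<^sup>2 \<le> K * (gap t - gap (Suc t))"
    using step_norm_sq_le by blast
  obtain c where c: "0 < c" "\<And>t. gap t \<le> \<xi> \<Longrightarrow> c * sqrt (gap t) ^ 3 \<le> gap t - gap (Suc t)"
    using gap_decrease_near by blast
  have "norm (x (Suc t) - x t) \<le> 4 * sqrt (K / c) * (u t - u (Suc t))" if "T \<le> t" for t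
    using le_linear_of_quartic_decrease[OF u(1) u(4) less_imp_le[OF K(1)] c(1)]
      K(2)[of t] c(2)[OF T[OF that]] by (simp only: u(2,3))
  then have "eventually (\<lambda>t. norm (norm (x (Suc t) - x t)) \<le> 4 * sqrt (K / c) * (u t - u (Suc t)))
      sequentially"
    unfolding eventually_sequentially by auto
  moreover have "summable (\<lambda>t. 4 * sqrt (K / c) * (u t - u (Suc t)))"
  proof -
    have "(\<lambda>t. u t) \<longlonglongrightarrow> 0"
      using tendsto_real_sqrt[OF tendsto_real_sqrt[OF gap_tendsto_zero]] by (simp add: u_def)
    then show ?thesis by (intro summable_mult telescope_summable')
  qed
  ultimately show ?thesis by (rule summable_comparison_test_ev)
qed

lemma limit_mem_Omega:
  assumes "x \<longlonglongrightarrow> z"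
  shows "z \<in> \<Omega>"
proof -
  define B where "B = \<xi> powr (4 * \<theta> - 1) / \<zeta> ^ 4"
  have "(\<lambda>t. infdist (x t) \<Omega> ^ 4) \<longlonglongrightarrow> infdist z \<Omega> ^ 4"
    by (intro tendsto_intros assms)
  moreover have "(\<lambda>t. B * gap t) \<longlonglongrightarrow> B * 0"
    by (intro tendsto_intros gap_tendsto_zero)
  moreover have "\<exists>T. \<forall>t\<ge>T. infdist (x t) \<Omega> ^ 4 \<le> B * gap t"
    using eventually_gap_le infdist_pow4_le_near[OF Psi_x_finite] by (auto simp: B_def)
  ultimately have "infdist z \<Omega> ^ 4 \<le> B * 0"
    by (rule LIMSEQ_le)
  then have "infdist z \<Omega> = 0"
    using infdist_nonneg[of z \<Omega>] by (simp add: power_le_zero_eq)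
  then show ?thesis
    using in_closed_iff_infdist_zero[OF closed_Omega \<Omega>_ne] by simp
qed

end

theorem theorem3:
  fixes f :: "'a::euclidean_space \<Rightarrow> real" and g :: "'a \<Rightarrow> 'a"
    and \<Psi> :: "'a \<Rightarrow> ereal"
    and L m M \<eta> \<xi> \<zeta> \<theta> \<gamma> \<beta> :: real
    and H :: "nat \<Rightarrow> 'a \<Rightarrow> 'a" and x p :: "nat \<Rightarrow> 'a" and \<alpha> :: "nat \<Rightarrow> real"
    and Fstar :: ereal and \<Omega> :: "'a set"
  assumes Fstar_def: "Fstar = (INF y. Fobj f \<Psi> y)"
    and \<Omega>_def: "\<Omega> = {y. Fobj f \<Psi> y = Fstar}"
    and \<Omega>_ne: "\<Omega> \<noteq> {}"
    and f_convex: "convex_on UNIV f"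
    and L_pos: "L > 0" and f_smooth: "L_smooth L f g"
    and \<Psi>_convex: "ext_convex \<Psi>" and \<Psi>_proper: "ext_proper \<Psi>" and \<Psi>_lsc: "ext_lsc \<Psi>"
    and \<gamma>: "0 < \<gamma>" "\<gamma> < 1" and \<beta>: "0 < \<beta>" "\<beta> < 1"
    and x0_dom: "\<Psi> (x 0) \<noteq> \<infinity>"
    and mM: "0 < m" "m \<le> M"
    and H_lin: "\<And>t. linear (H t)"
    and H_sa: "\<And>t u v. H t u \<bullet> v = u \<bullet> H t v"
    and H_bounds: "\<And>t v. m * (norm v)\<^sup>2 \<le> v \<bullet> H t v \<and> v \<bullet> H t v \<le> M * (norm v)\<^sup>2"
    and \<eta>: "0 \<le> \<eta>" "\<eta> < 1"
    and inexact: "\<And>t. Qmodel g \<Psi> (H t) (x t) (p t) - Qstar g \<Psi> (H t) (x t)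
                        \<le> - ereal \<eta> * Qstar g \<Psi> (H t) (x t)"
    and \<alpha>_def: "\<And>t. \<alpha> t = \<beta> ^ (LEAST k. Fobj f \<Psi> (x t + (\<beta> ^ k) *\<^sub>R p t)
                        \<le> Fobj f \<Psi> (x t) + ereal (\<gamma> * \<beta> ^ k) * Qmodel g \<Psi> (H t) (x t) (p t))"
    and x_step: "\<And>t. x (Suc t) = x t + \<alpha> t *\<^sub>R p t"
    and \<xi>\<zeta>: "\<xi> > 0" "\<zeta> > 0" and \<theta>: "1/4 < \<theta>" "\<theta> \<le> 1"
    and error_bound: "\<And>y. Fobj f \<Psi> y - Fstar \<le> ereal \<xi> \<Longrightarrow>
                        \<zeta> * infdist y \<Omega> \<le> (real_of_ereal (Fobj f \<Psi> y - Fstar)) powr \<theta>"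
  shows "\<exists>xs \<in> \<Omega>. x \<longlonglongrightarrow> xs"
proof -
  interpret isqa f g \<Psi> L Fstar \<Omega> \<xi> \<zeta> \<theta> m M \<eta> \<gamma> \<beta> H x p \<alpha>
    by (intro isqa.intro isqa_axioms.intro convex_composite_error_bound.intro
        convex_composite_error_bound_axioms.intro convex_composite.intro) (fact assms)+
  have "convergent x"
    by (rule convergent_if_summable_norm_diff[OF summable_step_norms])
  then have "x \<longlonglongrightarrow> lim x"
    by (simp add: convergent_LIMSEQ_iff)
  then show ?thesis
    using limit_mem_Omega by blast
qed

end
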